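(* Let $G$ be a monomer graph with boundary atoms $v_0,v_{n-1}$, $G^p$ its polymer graph and $G^*$ its induced star-linking graph, all with the same initial node features, and fix an integer $d_{thres}\ge 1$. Assume that the graph distance in $G$ between $v_0$ and $v_{n-1}$ is larger than $2d_{thres}-1$. If a network consists of localized graph attention layers (with threshold $d_{thres}$), nodewise transformations, and concludes with a mean pooling, then its output on $G^p$ is identical to its output on $G^*$.
   Context: A monomer graph is $G=(V,E,\mathbf{X})$ with atoms $V=\{v_0,\dots,v_{n-1}\}$, bonds $E$, features $\mathbf{x}_i\in\mathbb{R}^d$ of $v_i$, and boundary atoms $v_0,v_{n-1}$. The polymer graph $G^p$ has nodes $v^p_i$, $i\in\mathbb{Z}$, with $v^p_i$ carrying the features of $v_{i\bmod n}$; its edges are $(v^p_{kn+a},v^p_{kn+b})$ for every $k\in\mathbb{Z}$ and every bond $(v_a,v_b)\in E$, plus $(v^p_{kn-1},v^p_{kn})$ for every $k\in\mathbb{Z}$. The induced star-linking graph $G^*$ has node set $V$, edge set $E\cup\{(v_0,v_{n-1})\}$ and the same features. Localized graph attention (LGA) with threshold $d_{thres}$: with learnable $\mathbf{W}^Q,\mathbf{W}^K,\mathbf{W}^V\in\mathbb{R}^{d\times d}$, set $\mathbf{q}_j=\mathbf{W}^Q\mathbf{x}_j$, $\mathbf{k}_i=\mathbf{W}^K\mathbf{x}_i$, $\mathbf{v}_i=\mathbf{W}^V\mathbf{x}_i$; for nodes $i,j$ with graph distance $d_{ij}$ and a shortest path $\mathbf{p}_{ij}$, the attention logit is $\mathbf{k}_i^T\mathbf{q}_j/\sqrt{d}+f_{dist}(d_{ij})+f_{path}(\mathbf{p}_{ij})$,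 where $f_{dist}, f_{path}$ are fixed scalar-valued functions ($f_{path}$ depending only on the node/edge attributes along the path); the weights $\hat A_{ij}$ are the softmax of these logits over the nodes $i$ with $d_{ij}<d_{thres}$ (and $\hat A_{ij}=0$ if $d_{ij}\ge d_{thres}$); the new feature of $j$ is $\mathbf{y}_j=\sum_i \hat A_{ij}\mathbf{v}_i$. A nodewise transformation applies a fixed function to each node feature independently (e.g. residual connections, layer normalization, feed-forward networks). Layers are applied identically on both graphs. Node features on $G^p$ remain $n$-periodic, and mean pooling on $G^p$ is the average over one period $v^p_0,\dots,v^p_{n-1}$; on $G^*$ it is the average over all nodes. *)

theory Defs
  imports "HOL-Analysis.Analysis" "HOL-Library.Extended_Nat"
begin

definition walk :: "('v \<Rightarrow> 'v \<Rightarrow> bool) \<Rightarrow> 'v list \<Rightarrow> bool" where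
  "walk adj p \<longleftrightarrow> p \<noteq> [] \<and> (\<forall>k. Suc k < length p \<longrightarrow> adj (p ! k) (p ! Suc k))"

text \<open>Graph distance (infinite if no walk exists).\<close>
definition gdist :: "('v \<Rightarrow> 'v \<Rightarrow> bool) \<Rightarrow> 'v \<Rightarrow> 'v \<Rightarrow> enat" where
  "gdist adj i j = (INF p \<in> {p. walk adj p \<and> hd p = i \<and> last p = j}. enat (length p - 1))"

definition path_attr ::
  "('v \<Rightarrow> 'f) \<Rightarrow> ('v \<Rightarrow> 'v \<Rightarrow> 'e) \<Rightarrow> 'v list \<Rightarrow> 'f list \<times> 'e list" where
  "path_attr x ea p = (map x p, map (\<lambda>(u, w). ea u w) (zip p (tl p)))"

definition sp_attrs ::
  "('v \<Rightarrow> 'v \<Rightarrow> bool) \<Rightarrow> ('v \<Rightarrow> 'v \<Rightarrow> 'e) \<Rightarrow> ('v \<Rightarrow> 'f) \<Rightarrow> 'v \<Rightarrow> 'v \<Rightarrow> ('f list \<times> 'e list) set" where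
  "sp_attrs adj ea x i j =
     path_attr x ea ` {p. walk adj p \<and> hd p = i \<and> last p = j \<and> enat (length p - 1) = gdist adj i j}"

datatype ('d, 'e) layer =
    LGA "real^'d^'d" "real^'d^'d" "real^'d^'d" "nat \<Rightarrow> real"
        "((real^'d) list \<times> 'e list) set \<Rightarrow> real"
    \<comment> \<open>W^Q, W^K, W^V, f_dist, f_path\<close>
  | Nodewise "real^'d \<Rightarrow> real^'d"

definition lga_nbhd :: "('v \<Rightarrow> 'v \<Rightarrow> bool) \<Rightarrow> nat \<Rightarrow> 'v \<Rightarrow> 'v set" where
  "lga_nbhd adj dthres j = {i. gdist adj i j < enat dthres}"

definition lga_logit ::
  "('v \<Rightarrow> 'v \<Rightarrow> bool) \<Rightarrow> ('v \<Rightarrow> 'v \<Rightarrow> 'e) \<Rightarrow> real^'d^'d \<Rightarrow> real^'d^'d \<Rightarrow> (nat \<Rightarrow> real)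
    \<Rightarrow> (((real^'d) list \<times> 'e list) set \<Rightarrow> real) \<Rightarrow> ('v \<Rightarrow> real^'d) \<Rightarrow> 'v \<Rightarrow> 'v \<Rightarrow> real" where
  "lga_logit adj ea WQ WK fdist fpath x i j =
     ((WK *v x i) \<bullet> (WQ *v x j)) / sqrt (real CARD('d))
     + fdist (the_enat (gdist adj i j)) + fpath (sp_attrs adj ea x i j)"

definition lga ::
  "('v \<Rightarrow> 'v \<Rightarrow> bool) \<Rightarrow> ('v \<Rightarrow> 'v \<Rightarrow> 'e) \<Rightarrow> nat \<Rightarrow> real^'d^'d \<Rightarrow> real^'d^'d \<Rightarrow> real^'d^'d
    \<Rightarrow> (nat \<Rightarrow> real) \<Rightarrow> (((real^'d) list \<times> 'e list) set \<Rightarrow> real)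
    \<Rightarrow> ('v \<Rightarrow> real^'d) \<Rightarrow> 'v \<Rightarrow> real^'d" where
  "lga adj ea dthres WQ WK WV fdist fpath x j =
     (let N = lga_nbhd adj dthres j;
          Z = (\<Sum>i'\<in>N. exp (lga_logit adj ea WQ WK fdist fpath x i' j))
      in \<Sum>i\<in>N. (exp (lga_logit adj ea WQ WK fdist fpath x i j) / Z) *\<^sub>R (WV *v x i))"

fun apply_layer ::
  "('v \<Rightarrow> 'v \<Rightarrow> bool) \<Rightarrow> ('v \<Rightarrow> 'v \<Rightarrow> 'e) \<Rightarrow> nat \<Rightarrow> ('d, 'e) layer
    \<Rightarrow> ('v \<Rightarrow> real^'d) \<Rightarrow> ('v \<Rightarrow> real^'d)" where
  "apply_layer adj ea dthres (LGA WQ WK WV fdist fpath) x = lga adj ea dthres WQ WK WV fdist fpath x"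
| "apply_layer adj ea dthres (Nodewise f) x = (\<lambda>v. f (x v))"

fun run_layers ::
  "('v \<Rightarrow> 'v \<Rightarrow> bool) \<Rightarrow> ('v \<Rightarrow> 'v \<Rightarrow> 'e) \<Rightarrow> nat \<Rightarrow> ('d, 'e) layer list
    \<Rightarrow> ('v \<Rightarrow> real^'d) \<Rightarrow> ('v \<Rightarrow> real^'d)" where
  "run_layers adj ea dthres [] x = x"
| "run_layers adj ea dthres (L # Ls) x = run_layers adj ea dthres Ls (apply_layer adj ea dthres L x)"

text \<open>Monomer graph on atoms 0..n-1 with (undirected) bond set E.\<close>
definition monomer_adj :: "(nat \<times> nat) set \<Rightarrow> nat \<Rightarrow> nat \<Rightarrow> bool" where
  "monomer_adj E a b \<longleftrightarrow> (a, b) \<in> E \<or> (b, a) \<in> E"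

definition polymer_edge :: "nat \<Rightarrow> (nat \<times> nat) set \<Rightarrow> int \<Rightarrow> int \<Rightarrow> bool" where
  "polymer_edge n E i j \<longleftrightarrow>
     (\<exists>k a b. (a, b) \<in> E \<and> i = k * int n + int a \<and> j = k * int n + int b)
   \<or> (\<exists>k. i = k * int n - 1 \<and> j = k * int n)"

definition polymer_adj :: "nat \<Rightarrow> (nat \<times> nat) set \<Rightarrow> int \<Rightarrow> int \<Rightarrow> bool" where
  "polymer_adj n E i j \<longleftrightarrow> polymer_edge n E i j \<or> polymer_edge n E j i"

definition polymer_feat :: "nat \<Rightarrow> (nat \<Rightarrow> 'f) \<Rightarrow> int \<Rightarrow> 'f" where
  "polymer_feat n X i = X (nat (i mod int n))"

definition polymer_eattr :: "nat \<Rightarrow> (nat \<Rightarrow> nat \<Rightarrow> 'e) \<Rightarrow> int \<Rightarrow> int \<Rightarrow> 'e" where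
  "polymer_eattr n ea i j = ea (nat (i mod int n)) (nat (j mod int n))"

definition star_adj :: "nat \<Rightarrow> (nat \<times> nat) set \<Rightarrow> nat \<Rightarrow> nat \<Rightarrow> bool" where
  "star_adj n E a b \<longleftrightarrow> monomer_adj E a b \<or> (a = 0 \<and> b = n - 1) \<or> (a = n - 1 \<and> b = 0)"

definition pool_polymer :: "nat \<Rightarrow> (int \<Rightarrow> real^'d) \<Rightarrow> real^'d" where
  "pool_polymer n y = (1 / real n) *\<^sub>R (\<Sum>i<n. y (int i))"

definition pool_star :: "nat \<Rightarrow> (nat \<Rightarrow> real^'d) \<Rightarrow> real^'d" where
  "pool_star n y = (1 / real n) *\<^sub>R (\<Sum>i<n. y i)"

end

theory Submission
  imports Defs
begin

text \<open>
  Sending a polymer node i to its atom i mod n is a covering map of the polymer graph onto the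
  star-linking graph: bonds and links go to edges of G*, and every edge of G* at an atom lifts to
  an edge at each copy of that atom. It is moreover injective on balls of radius
  d_thres - 1. Indeed, with M = 2 d_thres - 1, the height of node i = k n + a, namely
  k M minus the distance from v_a to v_(n-1) truncated at M, changes by at most one along every
  edge of G^p precisely because v_0 and v_(n-1) are at least M apart in G; two copies of one atom
  differ in height by a nonzero multiple of M, so they cannot both lie within d_thres - 1 of a
  common node. A covering that is injective on balls maps each ball bijectively onto the
  corresponding ball of the base graph, preserving distances and shortest paths. Hence every
  attention layer, like every nodewise layer, commutes with pulling features back along the
  covering; the periodic polymer features are such a pullback, and mean pooling over one period
  visits every atom exactly once.
\<close>

lemma walk_Nil [simp]: "\<not> walk adj []"
  by (simp add: walk_def)

lemma walk_singleton [simp]: "walk adj [x]"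
  by (simp add: walk_def)

lemma walk_Cons_Cons [simp]: "walk adj (x # y # ys) \<longleftrightarrow> adj x y \<and> walk adj (y # ys)"
  by (auto simp: walk_def nth_Cons split: nat.splits)

lemma walk_Cons: "walk adj (x # p) \<longleftrightarrow> p = [] \<or> adj x (hd p) \<and> walk adj p"
  by (cases p) auto

lemma walk_map:
  assumes "\<And>u w. adj' u w \<Longrightarrow> adj (f u) (f w)" and "walk adj' p"
  shows "walk adj (map f p)"
  using assms(2) by (induction p rule: induct_list012) (auto simp: assms(1))

lemma walk_lipschitz:
  fixes f :: "'v \<Rightarrow> int"
  assumes "\<And>u w. adj u w \<Longrightarrow> \<bar>f u - f w\<bar> \<le> 1" and "walk adj p"
  shows "\<bar>f (hd p) - f (last p)\<bar> \<le> int (length p - 1)"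
  using assms(2)
proof (induction p rule: induct_list012)
  case (3 x y zs)
  then have "\<bar>f x - f y\<bar> \<le> 1" and "\<bar>f y - f (last (y # zs))\<bar> \<le> int (length zs)"
    using assms(1) by auto
  then show ?case
    by simp
qed simp_all

definition shortest_walks :: "('v \<Rightarrow> 'v \<Rightarrow> bool) \<Rightarrow> 'v \<Rightarrow> 'v \<Rightarrow> 'v list set" where
  "shortest_walks adj i j =
     {p. walk adj p \<and> hd p = i \<and> last p = j \<and> enat (length p - 1) = gdist adj i j}"

lemma sp_attrs_shortest_walks: "sp_attrs adj ea x i j = path_attr x ea ` shortest_walks adj i j"
  by (simp add: sp_attrs_def shortest_walks_def)

lemma gdist_le_walk: "walk adj p \<Longrightarrow> gdist adj (hd p) (last p) \<le> enat (length p - 1)"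
  unfolding gdist_def by (rule INF_lower) simp

lemma gdist_refl [simp]: "gdist adj i i = 0"
  using gdist_le_walk[of adj "[i]"] by (simp add: zero_enat_def[symmetric])

lemma shortest_walks_nonempty:
  assumes "gdist adj i j \<noteq> \<infinity>"
  obtains p where "p \<in> shortest_walks adj i j"
proof -
  let ?L = "(\<lambda>p. enat (length p - 1)) ` {p. walk adj p \<and> hd p = i \<and> last p = j}"
  have "?L \<noteq> {}"
  proof
    assume "?L = {}"
    then have "gdist adj i j = Inf {}"
      by (simp only: gdist_def)
    with assms show False
      by (simp add: top_enat_def)
  qed
  then obtain l where "l \<in> ?L"
    by blast
  then have "Inf ?L \<in> ?L"
    by (rule wellorder_InfI)
  moreover have "gdist adj i j = Inf ?L"
    by (simp only: gdist_def)
  ultimately show thesis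
    using that unfolding shortest_walks_def by auto
qed

lemma gdist_lipschitz:
  fixes f :: "'v \<Rightarrow> int"
  assumes "\<And>u w. adj u w \<Longrightarrow> \<bar>f u - f w\<bar> \<le> 1" and "gdist adj i j < enat r"
  shows "\<bar>f i - f j\<bar> < int r"
proof -
  have "gdist adj i j \<noteq> \<infinity>"
    using assms(2) by (cases "gdist adj i j") auto
  then obtain p where p: "p \<in> shortest_walks adj i j"
    by (rule shortest_walks_nonempty)
  then have "\<bar>f i - f j\<bar> \<le> int (length p - 1)"
    using walk_lipschitz[OF assms(1)] by (auto simp: shortest_walks_def)
  also have "length p - 1 < r"
    using p assms(2) by (simp add: shortest_walks_def flip: enat_ord_simps(2))
  finally show ?thesis
    by simp
qed

lemma gdist_Cons_le:
  assumes "adj a b"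
  shows "gdist adj a j \<le> gdist adj b j + 1"
proof (cases "gdist adj b j = \<infinity>")
  case False
  then obtain p where p: "p \<in> shortest_walks adj b j"
    by (rule shortest_walks_nonempty)
  then have "walk adj (a # p)" and "p \<noteq> []"
    using assms by (auto simp: shortest_walks_def walk_Cons)
  then have "gdist adj a j \<le> enat (length p)"
    using gdist_le_walk p by (fastforce simp: shortest_walks_def)
  also have "length p = Suc (length p - 1)"
    using \<open>p \<noteq> []\<close> by simp
  also have "enat (Suc (length p - 1)) = gdist adj b j + 1"
    using p by (simp add: shortest_walks_def eSuc_enat[symmetric] eSuc_plus_1)
  finally show ?thesis .
qed simp

lemma path_attr_map:
  "path_attr (\<lambda>u. x (f u)) (\<lambda>u w. ea (f u) (f w)) p = path_attr x ea (map f p)"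
  by (simp add: path_attr_def zip_map_map map_tl[symmetric] case_prod_beta)

locale ball_covering =
  fixes cover_adj :: "'u \<Rightarrow> 'u \<Rightarrow> bool" and base_adj :: "'v \<Rightarrow> 'v \<Rightarrow> bool"
    and proj :: "'u \<Rightarrow> 'v" and r :: nat
  assumes adj_proj: "cover_adj u w \<Longrightarrow> base_adj (proj u) (proj w)"
    and adj_lift: "base_adj a (proj w) \<Longrightarrow> \<exists>u. cover_adj u w \<and> proj u = a"
    and inj_on_ball:
      "gdist cover_adj u w < enat r \<Longrightarrow> gdist cover_adj u' w < enat r \<Longrightarrow> proj u = proj u'
        \<Longrightarrow> u = u'"
begin

lemma walk_proj: "walk cover_adj p \<Longrightarrow> walk base_adj (map proj p)"
  using walk_map[of cover_adj base_adj proj] adj_proj by blast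

lemma walk_lift:
  assumes "walk base_adj q" and "last q = proj w"
  shows "\<exists>p. walk cover_adj p \<and> last p = w \<and> map proj p = q"
  using assms
proof (induction q)
  case (Cons a q)
  show ?case
  proof (cases "q = []")
    case True
    then show ?thesis
      using Cons.prems by (intro exI[of _ "[w]"]) simp
  next
    case False
    then obtain p where p: "walk cover_adj p" "last p = w" "map proj p = q"
      using Cons by (auto simp: walk_Cons)
    moreover from this have "p \<noteq> []"
      using False by auto
    ultimately have "base_adj a (proj (hd p))"
      using Cons.prems False by (auto simp: walk_Cons hd_map)
    then obtain u where "cover_adj u (hd p)" "proj u = a"
      using adj_lift by blast
    then show ?thesis
      using p \<open>p \<noteq> []\<close> by (intro exI[of _ "u # p"]) (simp add: walk_Cons)
  qed
qed simp

lemma gdist_proj_le: "gdist base_adj (proj u) (proj w) \<le> gdist cover_adj u w"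
proof (cases "gdist cover_adj u w = \<infinity>")
  case False
  then obtain p where p: "p \<in> shortest_walks cover_adj u w"
    by (rule shortest_walks_nonempty)
  then have "p \<noteq> []"
    by (auto simp: shortest_walks_def)
  then show ?thesis
    using p gdist_le_walk[OF walk_proj, of p] by (auto simp: shortest_walks_def hd_map last_map)
qed simp

lemma shortest_walk_lift:
  assumes "q \<in> shortest_walks base_adj a (proj w)"
  obtains u p where "p \<in> shortest_walks cover_adj u w" "map proj p = q" "proj u = a"
    "gdist cover_adj u w = gdist base_adj a (proj w)"
proof -
  obtain p where p: "walk cover_adj p" "last p = w" "map proj p = q"
    using walk_lift assms by (auto simp: shortest_walks_def)
  then have "p \<noteq> []"
    by auto
  then have "proj (hd p) = a"
    using p assms by (auto simp: shortest_walks_def hd_map)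
  have len: "enat (length p - 1) = gdist base_adj a (proj w)"
    using p(3) assms by (auto simp: shortest_walks_def)
  have "gdist cover_adj (hd p) w \<le> gdist base_adj a (proj w)"
    using gdist_le_walk[OF p(1)] p(2) len by simp
  moreover have "gdist base_adj a (proj w) \<le> gdist cover_adj (hd p) w"
    using gdist_proj_le \<open>proj (hd p) = a\<close> by blast
  ultimately have dist: "gdist cover_adj (hd p) w = gdist base_adj a (proj w)"
    by (rule antisym)
  then have "p \<in> shortest_walks cover_adj (hd p) w"
    using p len by (simp add: shortest_walks_def)
  then show thesis
    using that p(3) \<open>proj (hd p) = a\<close> dist by blast
qed

lemma gdist_proj:
  assumes "gdist cover_adj u w < enat r"
  shows "gdist base_adj (proj u) (proj w) = gdist cover_adj u w"
proof -
  have "gdist base_adj (proj u) (proj w) < enat r"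
    using gdist_proj_le assms by (rule le_less_trans)
  then have "gdist base_adj (proj u) (proj w) \<noteq> \<infinity>"
    by (cases "gdist base_adj (proj u) (proj w)") auto
  then obtain q where "q \<in> shortest_walks base_adj (proj u) (proj w)"
    by (rule shortest_walks_nonempty)
  then obtain u' p where "proj u' = proj u"
    and dist: "gdist cover_adj u' w = gdist base_adj (proj u) (proj w)"
    by (rule shortest_walk_lift)
  moreover have "gdist cover_adj u' w < enat r"
    using dist gdist_proj_le[of u w] assms by simp
  ultimately have "u' = u"
    using inj_on_ball assms by blast
  then show ?thesis
    using dist by simp
qed

lemma bij_betw_lga_nbhd: "bij_betw proj (lga_nbhd cover_adj r w) (lga_nbhd base_adj r (proj w))"
proof (rule bij_betwI')
  fix u u' assume "u \<in> lga_nbhd cover_adj r w" "u' \<in> lga_nbhd cover_adj r w"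
  then show "proj u = proj u' \<longleftrightarrow> u = u'"
    using inj_on_ball by (auto simp: lga_nbhd_def)
next
  fix u assume "u \<in> lga_nbhd cover_adj r w"
  then show "proj u \<in> lga_nbhd base_adj r (proj w)"
    using gdist_proj_le[of u w] by (auto simp: lga_nbhd_def)
next
  fix a assume a: "a \<in> lga_nbhd base_adj r (proj w)"
  then have "gdist base_adj a (proj w) \<noteq> \<infinity>"
    by (cases "gdist base_adj a (proj w)") (auto simp: lga_nbhd_def)
  then obtain q where "q \<in> shortest_walks base_adj a (proj w)"
    by (rule shortest_walks_nonempty)
  then obtain u p where "proj u = a" "gdist cover_adj u w = gdist base_adj a (proj w)"
    by (rule shortest_walk_lift)
  with a show "\<exists>u \<in> lga_nbhd cover_adj r w. a = proj u"
    by (intro bexI[of _ u]) (auto simp: lga_nbhd_def)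
qed

lemma shortest_walks_proj:
  assumes "gdist cover_adj u w < enat r"
  shows "map proj ` shortest_walks cover_adj u w = shortest_walks base_adj (proj u) (proj w)"
proof
  show "map proj ` shortest_walks cover_adj u w \<subseteq> shortest_walks base_adj (proj u) (proj w)"
  proof
    fix q assume "q \<in> map proj ` shortest_walks cover_adj u w"
    then obtain p where p: "p \<in> shortest_walks cover_adj u w" "q = map proj p"
      by blast
    then have "p \<noteq> []"
      by (auto simp: shortest_walks_def)
    then show "q \<in> shortest_walks base_adj (proj u) (proj w)"
      using p walk_proj gdist_proj[OF assms] by (auto simp: shortest_walks_def hd_map last_map)
  qed
next
  show "shortest_walks base_adj (proj u) (proj w) \<subseteq> map proj ` shortest_walks cover_adj u w"
  proof
    fix q assume "q \<in> shortest_walks base_adj (proj u) (proj w)"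
    then obtain u' p where "p \<in> shortest_walks cover_adj u' w" "map proj p = q"
      and "proj u' = proj u" and dist: "gdist cover_adj u' w = gdist base_adj (proj u) (proj w)"
      by (rule shortest_walk_lift)
    moreover have "u' = u"
      using inj_on_ball[OF _ assms \<open>proj u' = proj u\<close>] dist gdist_proj[OF assms] assms
      by simp
    ultimately show "q \<in> map proj ` shortest_walks cover_adj u w"
      by blast
  qed
qed

lemma lga_logit_proj:
  assumes "gdist cover_adj u w < enat r"
  shows "lga_logit cover_adj (\<lambda>u w. ea (proj u) (proj w)) WQ WK fdist fpath (\<lambda>u. x (proj u)) u w
       = lga_logit base_adj ea WQ WK fdist fpath x (proj u) (proj w)"
proof -
  have "sp_attrs cover_adj (\<lambda>u w. ea (proj u) (proj w)) (\<lambda>u. x (proj u)) u w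
      = path_attr x ea ` map proj ` shortest_walks cover_adj u w"
    by (simp add: sp_attrs_shortest_walks path_attr_map image_image)
  also have "\<dots> = sp_attrs base_adj ea x (proj u) (proj w)"
    by (simp add: sp_attrs_shortest_walks shortest_walks_proj[OF assms])
  finally show ?thesis
    using gdist_proj[OF assms] by (simp add: lga_logit_def)
qed

lemma lga_proj:
  "lga cover_adj (\<lambda>u w. ea (proj u) (proj w)) r WQ WK WV fdist fpath (\<lambda>u. x (proj u)) w
   = lga base_adj ea r WQ WK WV fdist fpath x (proj w)"
proof -
  let ?N = "lga_nbhd cover_adj r w" and ?N' = "lga_nbhd base_adj r (proj w)"
  let ?logit = "\<lambda>a. lga_logit base_adj ea WQ WK fdist fpath x a (proj w)"
  have logit: "lga_logit cover_adj (\<lambda>u w. ea (proj u) (proj w)) WQ WK fdist fpath (\<lambda>u. x (proj u)) u w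
      = ?logit (proj u)" if "u \<in> ?N" for u
    using lga_logit_proj that by (simp add: lga_nbhd_def)
  have Z: "(\<Sum>u\<in>?N. exp (?logit (proj u))) = (\<Sum>a\<in>?N'. exp (?logit a))"
    by (rule sum.reindex_bij_betw[OF bij_betw_lga_nbhd])
  have "(\<Sum>u\<in>?N. (exp (?logit (proj u)) / c) *\<^sub>R (WV *v x (proj u)))
      = (\<Sum>a\<in>?N'. (exp (?logit a) / c) *\<^sub>R (WV *v x a))" for c
    by (rule sum.reindex_bij_betw[OF bij_betw_lga_nbhd])
  then show ?thesis
    unfolding lga_def Let_def using Z logit by (simp cong: sum.cong)
qed

lemma run_layers_proj:
  "run_layers cover_adj (\<lambda>u w. ea (proj u) (proj w)) r Ls (\<lambda>u. x (proj u))
   = (\<lambda>u. run_layers base_adj ea r Ls x (proj u))"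
proof (induction Ls arbitrary: x)
  case (Cons L Ls)
  have "apply_layer cover_adj (\<lambda>u w. ea (proj u) (proj w)) r L (\<lambda>u. x (proj u))
      = (\<lambda>u. apply_layer base_adj ea r L x (proj u))"
    by (cases L) (auto simp: lga_proj)
  then show ?case
    using Cons.IH by simp
qed simp

end

definition polymer_atom :: "nat \<Rightarrow> int \<Rightarrow> nat" where
  "polymer_atom n i = nat (i mod int n)"

lemma polymer_atom_decomp: "0 < n \<Longrightarrow> i = i div int n * int n + int (polymer_atom n i)"
  by (simp add: polymer_atom_def)

lemma polymer_atom_copy: "a < n \<Longrightarrow> polymer_atom n (k * int n + int a) = a"
  by (simp add: polymer_atom_def)

lemma polymer_copy_div: "a < n \<Longrightarrow> (k * int n + int a) div int n = k"
  by simp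

lemma polymer_link_node: "0 < n \<Longrightarrow> k * int n - 1 = (k - 1) * int n + int (n - 1)"
  by (simp add: algebra_simps of_nat_diff)

lemma polymer_atom_link: "0 < n \<Longrightarrow> polymer_atom n (k * int n - 1) = n - 1"
  by (simp only: polymer_link_node polymer_atom_copy diff_less zero_less_one)

lemma polymer_link_div: "0 < n \<Longrightarrow> (k * int n - 1) div int n = k - 1"
  by (simp only: polymer_link_node polymer_copy_div diff_less zero_less_one)

lemma star_adj_commute: "star_adj n E a b \<longleftrightarrow> star_adj n E b a"
  by (auto simp: star_adj_def monomer_adj_def)

lemma polymer_adj_proj:
  assumes "0 < n" and E: "\<forall>(a, b) \<in> E. a < n \<and> b < n" and "polymer_adj n E i j"
  shows "star_adj n E (polymer_atom n i) (polymer_atom n j)"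
proof -
  have "star_adj n E (polymer_atom n i) (polymer_atom n j)" if "polymer_edge n E i j" for i j
    using that unfolding polymer_edge_def
  proof (elim disjE exE conjE)
    fix k a b assume "(a, b) \<in> E" "i = k * int n + int a" "j = k * int n + int b"
    then show ?thesis
      using E by (auto simp: polymer_atom_copy star_adj_def monomer_adj_def)
  next
    fix k assume "i = k * int n - 1" "j = k * int n"
    then show ?thesis
      using polymer_atom_link polymer_atom_copy[of 0 n k] \<open>0 < n\<close> by (simp add: star_adj_def)
  qed
  then show ?thesis
    using assms(3) star_adj_commute unfolding polymer_adj_def by blast
qed

lemma polymer_adj_lift:
  assumes "0 < n" and E: "\<forall>(a, b) \<in> E. a < n \<and> b < n"
    and "star_adj n E a (polymer_atom n j)"
  shows "\<exists>i. polymer_adj n E i j \<and> polymer_atom n i = a"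
proof -
  define k where "k = j div int n"
  define b where "b = polymer_atom n j"
  have j: "j = k * int n + int b"
    using polymer_atom_decomp[OF \<open>0 < n\<close>] by (simp add: k_def b_def)
  consider "monomer_adj E a b" | "a = 0" "b = n - 1" | "a = n - 1" "b = 0"
    using assms(3) unfolding star_adj_def b_def by (elim disjE conjE) auto
  then show ?thesis
  proof cases
    case 1
    then have "a < n"
      using E by (auto simp: monomer_adj_def)
    have "polymer_adj n E (k * int n + int a) j"
      using 1 j unfolding monomer_adj_def polymer_adj_def polymer_edge_def by blast
    with \<open>a < n\<close> show ?thesis
      by (auto simp: polymer_atom_copy)
  next
    case 2
    then have "j = (k + 1) * int n - 1"
      using j polymer_link_node[OF \<open>0 < n\<close>, of "k + 1"] by simp
    then have "polymer_adj n E j ((k + 1) * int n)"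
      unfolding polymer_adj_def polymer_edge_def by blast
    with 2 show ?thesis
      using polymer_atom_copy[of 0 n "k + 1"] \<open>0 < n\<close> polymer_adj_def by auto
  next
    case 3
    then have "polymer_adj n E (k * int n - 1) j"
      using j unfolding polymer_adj_def polymer_edge_def by auto
    with 3 show ?thesis
      using polymer_atom_link \<open>0 < n\<close> by auto
  qed
qed

lemma capped_gdist_Cons_le:
  assumes "adj a b"
  shows "the_enat (min (gdist adj a t) (enat M)) \<le> the_enat (min (gdist adj b t) (enat M)) + 1"
  using gdist_Cons_le[of adj a b t] assms
  by (cases "gdist adj a t"; cases "gdist adj b t") (auto simp: one_enat_def)

text \<open>
  The height increases from (k - 1) M at atom 0 of copy k to k M at its atom n - 1, so it is
  continuous across the link edges as long as v_0 and v_(n-1) are at least M apart.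
\<close>
definition polymer_height :: "nat \<Rightarrow> (nat \<times> nat) set \<Rightarrow> nat \<Rightarrow> int \<Rightarrow> int" where
  "polymer_height n E M i = i div int n * int M
     - int (the_enat (min (gdist (monomer_adj E) (polymer_atom n i) (n - 1)) (enat M)))"

lemma polymer_height_lipschitz:
  assumes "0 < n" and E: "\<forall>(a, b) \<in> E. a < n \<and> b < n"
    and far: "enat M \<le> gdist (monomer_adj E) 0 (n - 1)" and "polymer_adj n E i j"
  shows "\<bar>polymer_height n E M i - polymer_height n E M j\<bar> \<le> 1"
proof -
  let ?h = "polymer_height n E M"
  let ?c = "\<lambda>a. the_enat (min (gdist (monomer_adj E) a (n - 1)) (enat M))"
  have "\<bar>?h i - ?h j\<bar> \<le> 1" if "polymer_edge n E i j" for i j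
    using that unfolding polymer_edge_def
  proof (elim disjE exE conjE)
    fix k a b assume ab: "(a, b) \<in> E" and ij: "i = k * int n + int a" "j = k * int n + int b"
    then have "monomer_adj E a b" "monomer_adj E b a"
      by (simp_all add: monomer_adj_def)
    then have "?c a \<le> ?c b + 1" "?c b \<le> ?c a + 1"
      by (simp_all only: capped_gdist_Cons_le)
    moreover have "a < n" "b < n"
      using ab E by auto
    ultimately show ?thesis
      using ij by (simp add: polymer_height_def polymer_atom_copy) arith
  next
    fix k assume ij: "i = k * int n - 1" "j = k * int n"
    have "?c (n - 1) = 0" "?c 0 = M"
      using far by (simp_all add: min_absorb2 flip: enat_0)
    moreover have "polymer_atom n i = n - 1" "i div int n = k - 1"
      using ij polymer_atom_link polymer_link_div \<open>0 < n\<close> by simp_all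
    moreover have "polymer_atom n j = 0" "j div int n = k"
      using ij polymer_atom_copy[of 0 n k] \<open>0 < n\<close> by simp_all
    ultimately show ?thesis
      by (auto simp: polymer_height_def algebra_simps)
  qed
  then show ?thesis
    using assms(4) unfolding polymer_adj_def by (metis abs_minus_commute)
qed

lemma polymer_atom_inj_on_ball:
  assumes "0 < n" and E: "\<forall>(a, b) \<in> E. a < n \<and> b < n"
    and far: "enat (2 * r - 1) \<le> gdist (monomer_adj E) 0 (n - 1)"
    and near: "gdist (polymer_adj n E) u w < enat r" "gdist (polymer_adj n E) u' w < enat r"
    and same_atom: "polymer_atom n u = polymer_atom n u'"
  shows "u = u'"
proof -
  let ?M = "2 * r - 1"
  let ?h = "polymer_height n E ?M"
  have "0 < r"
    using near(1) by (cases r) (simp_all add: zero_enat_def[symmetric])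
  note lipschitz = polymer_height_lipschitz[OF \<open>0 < n\<close> E far]
  have "\<bar>?h u - ?h w\<bar> < int r" "\<bar>?h u' - ?h w\<bar> < int r"
    using gdist_lipschitz[of "polymer_adj n E" ?h, OF lipschitz] near by blast+
  then have "\<bar>?h u - ?h u'\<bar> < int ?M"
    by linarith
  moreover have "?h u - ?h u' = (u div int n - u' div int n) * int ?M"
    by (simp add: polymer_height_def same_atom algebra_simps)
  ultimately have "\<bar>u div int n - u' div int n\<bar> * int ?M < 1 * int ?M"
    using \<open>0 < r\<close> by (simp add: abs_mult)
  then have "\<bar>u div int n - u' div int n\<bar> < 1"
    by (rule mult_right_less_imp_less) simp
  then have "u div int n = u' div int n"
    by simp
  then show ?thesis
    using polymer_atom_decomp[OF \<open>0 < n\<close>, of u] polymer_atom_decomp[OF \<open>0 < n\<close>, of u'] same_atom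
    by presburger
qed

lemma polymer_ball_covering:
  assumes "0 < n" and "\<forall>(a, b) \<in> E. a < n \<and> b < n"
    and "enat (2 * r - 1) \<le> gdist (monomer_adj E) 0 (n - 1)"
  shows "ball_covering (polymer_adj n E) (star_adj n E) (polymer_atom n) r"
  using polymer_adj_proj[OF assms(1,2)] polymer_adj_lift[OF assms(1,2)]
    polymer_atom_inj_on_ball[OF assms]
  by unfold_locales blast+

theorem theorem2:
  fixes n :: nat and E :: "(nat \<times> nat) set"
    and X :: "nat \<Rightarrow> real^'d" and ea :: "nat \<Rightarrow> nat \<Rightarrow> 'e"
    and dthres :: nat and Ls :: "('d, 'e) layer list"
  assumes "0 < n"
    and "\<forall>(a, b) \<in> E. a < n \<and> b < n"
    and "1 \<le> dthres"
    and "gdist (monomer_adj E) 0 (n - 1) > enat (2 * dthres - 1)"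
  shows "pool_polymer n (run_layers (polymer_adj n E) (polymer_eattr n ea) dthres Ls (polymer_feat n X))
       = pool_star n (run_layers (star_adj n E) ea dthres Ls X)"
proof -
  interpret ball_covering "polymer_adj n E" "star_adj n E" "polymer_atom n" dthres
    using polymer_ball_covering assms(1,2) less_imp_le[OF assms(4)] .
  have "polymer_feat n X = (\<lambda>i. X (polymer_atom n i))"
    and "polymer_eattr n ea = (\<lambda>i j. ea (polymer_atom n i) (polymer_atom n j))"
    by (simp_all add: fun_eq_iff polymer_feat_def polymer_eattr_def polymer_atom_def)
  then have "run_layers (polymer_adj n E) (polymer_eattr n ea) dthres Ls (polymer_feat n X)
      = (\<lambda>i. run_layers (star_adj n E) ea dthres Ls X (polymer_atom n i))"
    by (simp add: run_layers_proj)
  moreover have "polymer_atom n (int a) = a" if "a < n" for a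
    using polymer_atom_copy[OF that, of 0] by simp
  ultimately show ?thesis
    by (simp add: pool_polymer_def pool_star_def)
qed

end
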